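(* Let $(V_1, V_2)$ be a BCL pair on $\mathcal{H}$ such that $[V_2^*, V_1]$ is normal. Then \[ \operatorname{ran}[V_2^*, V_1] = \operatorname{ran}[V_1^*, V_2] \subseteq E_1, \] and $[V_2^*, V_1]|_{E_1^\perp} = [V_1^*, V_2]|_{E_1^\perp} = 0$.
   Context: All Hilbert spaces are complex and separable. An isometric pair is a pair $(V_1,V_2)$ of commuting isometries. An isometry $V$ is a shift if $V^{*m}\to0$ strongly. A BCL pair is an isometric pair with $V_1V_2$ a shift. $[V_2^*,V_1] := V_2^*V_1 - V_1V_2^*$ and $[V_1^*,V_2] := V_1^*V_2 - V_2V_1^*$. $C(V_1,V_2) := I - V_1V_1^* - V_2V_2^* + V_1V_2V_1^*V_2^*$ and $E_1 := \ker(C(V_1,V_2)-I)$. *)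

theory Defs
  imports "HOL-Analysis.Analysis"
begin

text \<open>The distribution has no complex inner product spaces, so we introduce a type class
of complex Hilbert spaces: a real Banach space with a compatible complex scalar
multiplication and a complex inner product (antilinear in the first, linear in the
second argument) inducing the norm, which is moreover separable.\<close>

class complex_hilbert = banach +
  fixes scaleC :: "complex \<Rightarrow> 'a \<Rightarrow> 'a" (infixr \<open>*\<^sub>C\<close> 75)
    and cinner :: "'a \<Rightarrow> 'a \<Rightarrow> complex"
  assumes scaleC_add_right: "a *\<^sub>C (x + y) = a *\<^sub>C x + a *\<^sub>C y"
    and scaleC_add_left: "(a + b) *\<^sub>C x = a *\<^sub>C x + b *\<^sub>C x"
    and scaleC_scaleC: "a *\<^sub>C (b *\<^sub>C x) = (a * b) *\<^sub>C x"
    and scaleC_one: "1 *\<^sub>C x = x"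
    and scaleR_scaleC: "scaleR r x = complex_of_real r *\<^sub>C x"
    and cinner_commute: "cinner x y = cnj (cinner y x)"
    and cinner_add_right: "cinner x (y + z) = cinner x y + cinner x z"
    and cinner_scaleC_right: "cinner x (a *\<^sub>C y) = a * cinner x y"
    and cinner_pos: "0 \<le> Re (cinner x x)"
    and cinner_eq_zero_iff: "cinner x x = 0 \<longleftrightarrow> x = 0"
    and norm_eq_sqrt_cinner: "norm x = sqrt (Re (cinner x x))"

class sep_complex_hilbert = complex_hilbert +
  assumes separable: "\<exists>f :: nat \<Rightarrow> 'a. \<forall>x e. 0 < e \<longrightarrow> (\<exists>n. norm (x - f n) < e)"

definition bounded_clinear_op :: "('a::sep_complex_hilbert \<Rightarrow> 'a) \<Rightarrow> bool" where
  "bounded_clinear_op T \<longleftrightarrow>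
     (\<forall>x y. T (x + y) = T x + T y) \<and> (\<forall>a x. T (a *\<^sub>C x) = a *\<^sub>C T x) \<and>
     (\<exists>K. \<forall>x. norm (T x) \<le> K * norm x)"

definition is_adjoint :: "('a::sep_complex_hilbert \<Rightarrow> 'a) \<Rightarrow> ('a \<Rightarrow> 'a) \<Rightarrow> bool" where
  "is_adjoint T S \<longleftrightarrow> (\<forall>x y. cinner (T x) y = cinner x (S y))"

definition isometry :: "('a::sep_complex_hilbert \<Rightarrow> 'a) \<Rightarrow> bool" where
  "isometry V \<longleftrightarrow> bounded_clinear_op V \<and> (\<forall>x. norm (V x) = norm x)"

definition isometric_pair :: "('a::sep_complex_hilbert \<Rightarrow> 'a) \<Rightarrow> ('a \<Rightarrow> 'a) \<Rightarrow> bool" where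
  "isometric_pair V1 V2 \<longleftrightarrow> isometry V1 \<and> isometry V2 \<and> V1 \<circ> V2 = V2 \<circ> V1"

definition is_shift :: "('a::sep_complex_hilbert \<Rightarrow> 'a) \<Rightarrow> bool" where
  "is_shift V \<longleftrightarrow> isometry V \<and>
     (\<exists>Vs. is_adjoint V Vs \<and> (\<forall>x. (\<lambda>m. (Vs ^^ m) x) \<longlonglongrightarrow> 0))"

definition BCL_pair :: "('a::sep_complex_hilbert \<Rightarrow> 'a) \<Rightarrow> ('a \<Rightarrow> 'a) \<Rightarrow> bool" where
  "BCL_pair V1 V2 \<longleftrightarrow> isometric_pair V1 V2 \<and> is_shift (V1 \<circ> V2)"

definition normal_op :: "('a::sep_complex_hilbert \<Rightarrow> 'a) \<Rightarrow> bool" where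
  "normal_op T \<longleftrightarrow> (\<exists>S. is_adjoint T S \<and> T \<circ> S = S \<circ> T)"

definition commutator :: "('a::sep_complex_hilbert \<Rightarrow> 'a) \<Rightarrow> ('a \<Rightarrow> 'a) \<Rightarrow> 'a \<Rightarrow> 'a" where
  "commutator A B = (\<lambda>x. A (B x) - B (A x))"

text \<open>Defect operator C(V1,V2) = I - V1V1* - V2V2* + V1V2V1*V2*, given adjoints W1, W2.\<close>
definition defect_op :: "('a::sep_complex_hilbert \<Rightarrow> 'a) \<Rightarrow> ('a \<Rightarrow> 'a) \<Rightarrow> ('a \<Rightarrow> 'a) \<Rightarrow> ('a \<Rightarrow> 'a) \<Rightarrow> 'a \<Rightarrow> 'a" where
  "defect_op V1 V2 W1 W2 = (\<lambda>x. x - V1 (W1 x) - V2 (W2 x) + V1 (V2 (W1 (W2 x))))"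

definition orth_compl :: "'a::sep_complex_hilbert set \<Rightarrow> 'a set" where
  "orth_compl E = {y. \<forall>x\<in>E. cinner x y = 0}"

end

(*
  Write A = [V2^*, V1]. Its adjoint is B = [V1^*, V2], and normality of A means AB = BA,
  hence norm (A x) = norm (B x). Since Vi^* Vi = I and V1 V2 = V2 V1, A vanishes on ran V2 and
  B on ran V1, so by normality B vanishes on ran V2 as well. Therefore ran A is orthogonal to
  ran V1 and ran V2, i.e. contained in the common kernel of V1^* and V2^*, on which C(V1,V2)
  acts as the identity.

  For a normal operator T, ran T = ran T^*: split x = m + k with m in the closure of ran T^* and
  k orthogonal to it (projection theorem), so that T k = 0; and T m lies in ran T^* because
  T z_n converges whenever T^* z_n does. Hence ran B = ran A is contained in E1, and for x
  orthogonal to E1 we get norm (A x)^2 = <x, B A x> = 0, and likewise B x = 0.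
*)
theory Submission
  imports Defs
begin

section \<open>Complex inner products\<close>

lemma cinner_add_left: "cinner (x + y) z = cinner x z + cinner (y::'a::complex_hilbert) z"
  by (metis cinner_commute cinner_add_right complex_cnj_add)

lemma cinner_zero_right [simp]: "cinner (x::'a::complex_hilbert) 0 = 0"
  using cinner_add_right [of x 0 0] by simp

lemma cinner_zero_left [simp]: "cinner 0 (x::'a::complex_hilbert) = 0"
  by (metis cinner_zero_right cinner_commute complex_cnj_zero)

lemma cinner_diff_right: "cinner x (y - z) = cinner x y - cinner x (z::'a::complex_hilbert)"
  by (metis cinner_add_right diff_add_cancel eq_diff_eq)

lemma cinner_diff_left: "cinner (x - y) z = cinner x z - cinner y (z::'a::complex_hilbert)"
  by (metis cinner_add_left diff_add_cancel eq_diff_eq)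

lemma cinner_scaleR_right: "cinner x (r *\<^sub>R y) = of_real r * cinner x (y::'a::complex_hilbert)"
  by (simp add: scaleR_scaleC cinner_scaleC_right)

lemma Re_cinner_commute: "Re (cinner x y) = Re (cinner y (x::'a::complex_hilbert))"
  by (metis cinner_commute cnj.sel(1))

lemma power2_norm_eq_cinner: "(norm x)\<^sup>2 = Re (cinner x (x::'a::complex_hilbert))"
  by (simp add: norm_eq_sqrt_cinner cinner_pos)

lemma cinner_ext: "(\<And>z. cinner z x = cinner z y) \<Longrightarrow> x = (y::'a::complex_hilbert)"
  by (metis cinner_diff_right cinner_eq_zero_iff diff_self eq_iff_diff_eq_0)

lemma power2_norm_add_cinner:
  "(norm (x + y))\<^sup>2 = (norm x)\<^sup>2 + 2 * Re (cinner x y) + (norm (y::'a::complex_hilbert))\<^sup>2"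
  using Re_cinner_commute [of x y]
  by (simp add: power2_norm_eq_cinner cinner_add_left cinner_add_right)

lemma power2_norm_diff_cinner:
  "(norm (x - y))\<^sup>2 = (norm x)\<^sup>2 - 2 * Re (cinner x y) + (norm (y::'a::complex_hilbert))\<^sup>2"
  using Re_cinner_commute [of x y]
  by (simp add: power2_norm_eq_cinner cinner_diff_left cinner_diff_right)

lemma parallelogram_law_cinner:
  "(norm (x + y))\<^sup>2 + (norm (x - y))\<^sup>2 = 2 * (norm x)\<^sup>2 + 2 * (norm (y::'a::complex_hilbert))\<^sup>2"
  by (simp add: power2_norm_add_cinner power2_norm_diff_cinner)

lemma Re_cinner_le_sum_squares:
  "2 * Re (cinner x y) \<le> (norm x)\<^sup>2 + (norm (y::'a::complex_hilbert))\<^sup>2"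
  using power2_norm_diff_cinner [of x y] zero_le_power2 [of "norm (x - y)"] by linarith

section \<open>Projection onto closed subspaces\<close>

lemma subspace_closure:
  fixes S :: "'a::real_normed_vector set"
  assumes "subspace S"
  shows "subspace (closure S)"
  unfolding subspace_def
proof (intro conjI ballI allI)
  show "0 \<in> closure S"
    using assms closure_subset subspace_0 by blast
next
  fix x y assume "x \<in> closure S" "y \<in> closure S"
  then obtain f g where "\<forall>n. f n \<in> S" "f \<longlonglongrightarrow> x" "\<forall>n. g n \<in> S" "g \<longlonglongrightarrow> y"
    unfolding closure_sequential by blast
  then show "x + y \<in> closure S"
    unfolding closure_sequential
    by (intro exI [of _ "\<lambda>n. f n + g n"]) (auto intro: tendsto_add subspace_add [OF assms])
next
  fix c x assume "x \<in> closure S"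
  then obtain f where "\<forall>n. f n \<in> S" "f \<longlonglongrightarrow> x"
    unfolding closure_sequential by blast
  then show "c *\<^sub>R x \<in> closure S"
    unfolding closure_sequential
    by (intro exI [of _ "\<lambda>n. c *\<^sub>R f n"]) (auto intro: tendsto_scaleR subspace_scale [OF assms])
qed

lemma convex_norm_diff_le_infdist_excess:
  fixes M :: "'a::complex_hilbert set"
  assumes "convex M" and "a \<in> M" and "b \<in> M"
  shows "(norm (a - b))\<^sup>2 \<le>
    2 * ((norm (x - a))\<^sup>2 - (infdist x M)\<^sup>2) + 2 * ((norm (x - b))\<^sup>2 - (infdist x M)\<^sup>2)"
proof -
  define c where "c = (1/2) *\<^sub>R a + (1/2) *\<^sub>R b"
  have "c \<in> M"
    using convexD [OF assms] by (simp add: c_def)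
  then have "(infdist x M)\<^sup>2 \<le> (norm (x - c))\<^sup>2"
    by (intro power_mono) (simp_all add: infdist_le infdist_nonneg flip: dist_norm)
  then have "4 * (infdist x M)\<^sup>2 \<le> (2 * norm (x - c))\<^sup>2"
    by (simp add: power_mult_distrib)
  also have "2 * norm (x - c) = norm ((x - a) + (x - b))"
  proof -
    have "(x - a) + (x - b) = 2 *\<^sub>R (x - c)"
      by (simp add: c_def algebra_simps scaleR_2)
    then show ?thesis by simp
  qed
  finally show ?thesis
    using parallelogram_law_cinner [of "x - a" "x - b"] by (simp add: norm_minus_commute)
qed

lemma convex_minimizing_sequence_Cauchy:
  fixes M :: "'a::complex_hilbert set"
  assumes "convex M" and "\<And>n. f n \<in> M" and lim: "(\<lambda>n. norm (x - f n)) \<longlonglongrightarrow> infdist x M"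
  shows "Cauchy f"
proof (rule metric_CauchyI)
  fix e :: real assume "0 < e"
  define g where "g n = (norm (x - f n))\<^sup>2 - (infdist x M)\<^sup>2" for n
  have "g \<longlonglongrightarrow> 0"
    unfolding g_def using tendsto_diff [OF tendsto_power [OF lim, of 2] tendsto_const [of "(infdist x M)\<^sup>2"]]
    by simp
  then have "\<exists>N. \<forall>n\<ge>N. dist (g n) 0 < e\<^sup>2 / 4"
    using \<open>0 < e\<close> unfolding lim_sequentially by (meson zero_less_divide_iff zero_less_numeral zero_less_power)
  then obtain N where N: "\<And>n. n \<ge> N \<Longrightarrow> g n < e\<^sup>2 / 4"
    by (metis abs_less_iff diff_zero dist_real_def)
  have "dist (f n) (f k) < e" if "n \<ge> N" "k \<ge> N" for n k
  proof -
    have "(dist (f n) (f k))\<^sup>2 < e\<^sup>2"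
      using convex_norm_diff_le_infdist_excess [OF assms(1,2,2), of n k x] N [OF that(1)] N [OF that(2)]
      unfolding dist_norm g_def by argo
    then show ?thesis
      using \<open>0 < e\<close> by (simp add: power_less_imp_less_base)
  qed
  then show "\<exists>N. \<forall>n\<ge>N. \<forall>k\<ge>N. dist (f n) (f k) < e" by blast
qed

lemma closest_point_exists_convex:
  fixes M :: "'a::complex_hilbert set"
  assumes "closed M" and "convex M" and "M \<noteq> {}"
  obtains m where "m \<in> M" and "\<And>m'. m' \<in> M \<Longrightarrow> norm (x - m) \<le> norm (x - m')"
proof -
  define d where "d = infdist x M"
  have "\<exists>m\<in>M. dist x m < d + inverse (real (Suc n))" for n
    using cINF_less_iff [of M "dist x" "d + inverse (real (Suc n))"] assms(3)
    by (simp add: d_def infdist_notempty)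
  then obtain f where f_in: "\<And>n. f n \<in> M" and f_close: "\<And>n. dist x (f n) < d + inverse (real (Suc n))"
    by metis
  have d_le: "d \<le> norm (x - m)" if "m \<in> M" for m
    using infdist_le [OF that, of x] by (simp add: d_def dist_norm)
  have lim_norm: "(\<lambda>n. norm (x - f n)) \<longlonglongrightarrow> d"
  proof (rule tendsto_sandwich [OF _ _ tendsto_const LIMSEQ_inverse_real_of_nat_add])
    show "\<forall>\<^sub>F n in sequentially. d \<le> norm (x - f n)"
      using d_le f_in by simp
    show "\<forall>\<^sub>F n in sequentially. norm (x - f n) \<le> d + inverse (real (Suc n))"
      by (intro always_eventually allI less_imp_le) (use f_close in \<open>simp add: dist_norm\<close>)
  qed
  then have "Cauchy f"
    unfolding d_def by (rule convex_minimizing_sequence_Cauchy [OF assms(2) f_in])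
  then obtain m where lim: "f \<longlonglongrightarrow> m"
    using Cauchy_convergent_iff convergent_def by blast
  have "m \<in> M"
    using closed_sequentially [OF assms(1)] f_in lim by blast
  moreover have "norm (x - m) = d"
    using LIMSEQ_unique [OF tendsto_norm [OF tendsto_diff [OF tendsto_const lim]] lim_norm] .
  ultimately show ?thesis
    using that d_le by metis
qed

lemma closest_point_subspace_orthogonal:
  fixes M :: "'a::complex_hilbert set"
  assumes "subspace M" and "m \<in> M" and closest: "\<And>m'. m' \<in> M \<Longrightarrow> norm (x - m) \<le> norm (x - m')"
    and "v \<in> M"
  shows "Re (cinner v (x - m)) = 0"
proof (cases "v = 0")
  case False
  define c where "c = Re (cinner v (x - m))"
  define N where "N = (norm v)\<^sup>2"
  have "N > 0" using False by (simp add: N_def)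
  have "m + (c / N) *\<^sub>R v \<in> M"
    using assms by (simp add: subspace_add subspace_scale)
  from closest [OF this] have "(norm (x - m))\<^sup>2 \<le> (norm ((x - m) - (c / N) *\<^sub>R v))\<^sup>2"
    by (simp add: power_mono diff_diff_eq)
  also have "\<dots> = (norm (x - m))\<^sup>2 - 2 * (c / N) * c + (c / N)\<^sup>2 * N"
  proof -
    have "Re (cinner (x - m) ((c / N) *\<^sub>R v)) = (c / N) * c"
      using Re_cinner_commute [of v "x - m"] by (simp add: cinner_scaleR_right c_def)
    moreover have "(norm ((c / N) *\<^sub>R v))\<^sup>2 = (c / N)\<^sup>2 * N"
      by (simp only: norm_scaleR power_mult_distrib power2_abs N_def)
    ultimately show ?thesis
      by (simp only: power2_norm_diff_cinner)
  qed
  also have "\<dots> = (norm (x - m))\<^sup>2 - c\<^sup>2 / N"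
    using \<open>N > 0\<close> by (simp add: field_simps power2_eq_square)
  finally have "c\<^sup>2 / N \<le> 0" by simp
  then show ?thesis
    using \<open>N > 0\<close> by (simp add: c_def divide_le_0_iff)
qed simp

lemma closed_subspace_orthogonal_decomposition:
  fixes M :: "'a::complex_hilbert set"
  assumes "closed M" and "subspace M"
  obtains m where "m \<in> M" and "\<And>v. v \<in> M \<Longrightarrow> Re (cinner v (x - m)) = 0"
proof -
  have "M \<noteq> {}" using subspace_0 [OF assms(2)] by blast
  with assms obtain m where "m \<in> M" "\<And>m'. m' \<in> M \<Longrightarrow> norm (x - m) \<le> norm (x - m')"
    using closest_point_exists_convex subspace_imp_convex by metis
  with assms(2) show ?thesis
    using that closest_point_subspace_orthogonal by blast
qed

section \<open>Adjoints and normal operators\<close>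

lemma adjoint_sym: "is_adjoint T S \<Longrightarrow> is_adjoint S T"
  unfolding is_adjoint_def by (metis cinner_commute)

lemma adjoint_unique: "is_adjoint T S \<Longrightarrow> is_adjoint T S' \<Longrightarrow> S = S'"
  unfolding is_adjoint_def by (metis cinner_ext ext)

lemma adjoint_cinner_right: "is_adjoint T S \<Longrightarrow> cinner x (S y) = cinner (T x) y"
  by (simp add: is_adjoint_def)

lemma adjoint_linear:
  assumes "is_adjoint T S"
  shows "linear S"
proof
  show "S (x + y) = S x + S y" for x y
    by (rule cinner_ext) (simp add: adjoint_cinner_right [OF assms] cinner_add_right)
  show "S (r *\<^sub>R x) = r *\<^sub>R S x" for r x
    by (rule cinner_ext) (simp add: adjoint_cinner_right [OF assms] cinner_scaleR_right)
qed

lemma adjoint_bounded_linear: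
  assumes "is_adjoint T S" and "\<And>x. norm (S x) \<le> K * norm x"
  shows "bounded_linear S"
  using adjoint_linear [OF assms(1)] assms(2)
  by (auto simp: bounded_linear_def bounded_linear_axioms_def linear_conv_bounded_linear mult.commute)

lemma isometry_adjoint_contraction:
  assumes "is_adjoint V W" and "\<And>x. norm (V x) = norm x"
  shows "norm (W y) \<le> norm y"
proof -
  have "2 * (norm (W y))\<^sup>2 = 2 * Re (cinner (V (W y)) y)"
    using assms(1) by (simp add: is_adjoint_def power2_norm_eq_cinner)
  also have "\<dots> \<le> (norm (W y))\<^sup>2 + (norm y)\<^sup>2"
    using Re_cinner_le_sum_squares [of "V (W y)" y] assms(2) by simp
  finally show ?thesis
    by (simp add: power2_le_iff_abs_le)
qed

lemma isometry_adjoint_left_inverse: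
  assumes "is_adjoint V W" and "\<And>x. norm (V x) = norm x"
  shows "W (V x) = x"
proof -
  have "Re (cinner (W (V x)) x) = (norm x)\<^sup>2"
    using assms by (metis Re_cinner_commute is_adjoint_def power2_norm_eq_cinner)
  then have "(norm (W (V x) - x))\<^sup>2 = (norm (W (V x)))\<^sup>2 - (norm x)\<^sup>2"
    by (simp add: power2_norm_diff_cinner)
  also have "\<dots> \<le> 0"
    using isometry_adjoint_contraction [OF assms, of "V x"] assms(2) by (simp add: power_mono)
  finally show ?thesis by simp
qed

lemma adjoint_commutator:
  assumes "is_adjoint A A'" and "is_adjoint B B'"
  shows "is_adjoint (commutator A B) (commutator B' A')"
  using assms by (simp add: is_adjoint_def commutator_def cinner_diff_left cinner_diff_right)

lemma bounded_linear_commutator: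
  "bounded_linear A \<Longrightarrow> bounded_linear B \<Longrightarrow> bounded_linear (commutator A B)"
  unfolding commutator_def by (intro bounded_linear_sub bounded_linear_compose [of A B] bounded_linear_compose [of B A])

lemma isometry_bounded_linear:
  assumes "is_adjoint V W" and "\<And>x. norm (V x) = norm x"
  shows "bounded_linear V" and "bounded_linear W"
   by (rule adjoint_bounded_linear [OF adjoint_sym [OF assms(1)], of 1], simp add: assms(2))
     (rule adjoint_bounded_linear [OF assms(1), of 1], simp add: isometry_adjoint_contraction [OF assms])

lemma normal_op_commute: "normal_op T \<Longrightarrow> is_adjoint T S \<Longrightarrow> T \<circ> S = S \<circ> T"
  unfolding normal_op_def using adjoint_unique by blast

lemma normal_norm_eq:
  assumes "is_adjoint T S" and "T \<circ> S = S \<circ> T"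
  shows "norm (T x) = norm (S x)"
proof -
  have "cinner (T x) (T x) = cinner x (S (T x))"
    by (rule adjoint_cinner_right [OF assms(1), symmetric])
  also have "\<dots> = cinner x (T (S x))"
    using fun_cong [OF assms(2), of x] by simp
  also have "\<dots> = cinner (S x) (S x)"
    by (rule adjoint_cinner_right [OF adjoint_sym [OF assms(1)]])
  finally show ?thesis
    by (simp add: norm_eq_sqrt_cinner)
qed

lemma adjoint_vanishes_on_orthogonal_range:
  assumes "is_adjoint T S" and "\<And>w. Re (cinner (S w) k) = 0"
  shows "T k = 0"
proof -
  have "(norm (T k))\<^sup>2 = Re (cinner k (S (T k)))"
    by (simp add: power2_norm_eq_cinner adjoint_cinner_right [OF assms(1)])
  also have "\<dots> = 0"
    using assms(2) by (simp add: Re_cinner_commute)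
  finally show ?thesis by simp
qed

lemma normal_image_closure_range:
  assumes adj: "is_adjoint T S" and comm: "T \<circ> S = S \<circ> T"
    and T: "bounded_linear T" and S: "bounded_linear S"
    and "m \<in> closure (range S)"
  shows "T m \<in> range S"
proof -
  obtain y where y: "\<forall>n. y n \<in> range S" and lim_y: "y \<longlonglongrightarrow> m"
    using assms(5) unfolding closure_sequential by blast
  from y have "\<forall>n. \<exists>w. y n = S w"
    by blast
  then obtain z where "\<forall>n. y n = S (z n)"
    by (auto dest!: choice)
  then have "y = (\<lambda>n. S (z n))"
    by auto
  with lim_y have lim_Sz: "(\<lambda>n. S (z n)) \<longlonglongrightarrow> m"
    by simp
  have TS: "T (S a) = S (T a)" for a
    using fun_cong [OF comm, of a] by simp
  have dist_eq: "dist (T a) (T b) = dist (S a) (S b)" for a b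
  proof -
    have "dist (T a) (T b) = norm (T (a - b))"
      by (simp add: dist_norm linear_diff [OF bounded_linear.linear [OF T]])
    also have "\<dots> = norm (S (a - b))"
      by (rule normal_norm_eq [OF adj comm])
    also have "\<dots> = dist (S a) (S b)"
      by (simp add: dist_norm linear_diff [OF bounded_linear.linear [OF S]])
    finally show ?thesis .
  qed
  have "Cauchy (\<lambda>n. T (z n))"
    using LIMSEQ_imp_Cauchy [OF lim_Sz] unfolding Cauchy_def dist_eq .
  then obtain w where "(\<lambda>n. T (z n)) \<longlonglongrightarrow> w"
    using Cauchy_convergent_iff convergent_def by blast
  then have "(\<lambda>n. T (S (z n))) \<longlonglongrightarrow> S w"
    unfolding TS by (rule bounded_linear.tendsto [OF S])
  moreover have "(\<lambda>n. T (S (z n))) \<longlonglongrightarrow> T m"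
    by (rule bounded_linear.tendsto [OF T lim_Sz])
  ultimately have "T m = S w"
    by (rule LIMSEQ_unique [rotated])
  then show ?thesis by simp
qed

lemma normal_range_subset:
  assumes adj: "is_adjoint T S" and comm: "T \<circ> S = S \<circ> T"
    and T: "bounded_linear T" and S: "bounded_linear S"
  shows "range T \<subseteq> range S"
proof
  fix y assume "y \<in> range T"
  then obtain x where y: "y = T x" by blast
  have "subspace (closure (range S))"
    by (intro subspace_closure linear_subspace_image bounded_linear.linear [OF S] subspace_UNIV)
  then obtain m where m: "m \<in> closure (range S)"
    and orth: "\<And>v. v \<in> closure (range S) \<Longrightarrow> Re (cinner v (x - m)) = 0"
    using closed_subspace_orthogonal_decomposition [of "closure (range S)" x] by blast
  have "T (x - m) = 0"
    by (rule adjoint_vanishes_on_orthogonal_range [OF adj] orth closure_subset [THEN subsetD] rangeI)+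
  then have "y = T m"
    by (simp add: y linear_diff [OF bounded_linear.linear [OF T]])
  then show "y \<in> range S"
    using normal_image_closure_range [OF adj comm T S m] by simp
qed

lemma adjoint_comp_eq_zero:
  assumes "is_adjoint V W" and "is_adjoint T S" and "\<And>z. S (V z) = 0"
  shows "W (T x) = 0"
proof (rule cinner_ext)
  fix z
  have "cinner z (W (T x)) = cinner (V z) (T x)"
    by (rule adjoint_cinner_right [OF assms(1)])
  also have "\<dots> = cinner (S (V z)) x"
    by (rule adjoint_cinner_right [OF adjoint_sym [OF assms(2)]])
  finally show "cinner z (W (T x)) = cinner z 0"
    by (simp add: assms(3))
qed

lemma adjoint_vanishes_on_orth_compl:
  assumes "is_adjoint T S" and "S (T x) \<in> E" and "x \<in> orth_compl E"
  shows "T x = 0"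
proof -
  have "cinner (S (T x)) x = 0"
    using assms(2,3) by (simp add: orth_compl_def)
  then have "cinner (T x) (T x) = 0"
    using cinner_commute [of x "S (T x)"] by (simp add: adjoint_cinner_right [OF assms(1)])
  then show ?thesis
    by (simp add: cinner_eq_zero_iff)
qed

lemma normal_range_eq:
  assumes "is_adjoint T S" and "T \<circ> S = S \<circ> T" and "bounded_linear T" and "bounded_linear S"
  shows "range T = range S"
  using normal_range_subset [OF assms] normal_range_subset [OF adjoint_sym [OF assms(1)] assms(2) [symmetric] assms(4,3)]
  by blast

section \<open>Commutators of an isometric pair\<close>

lemma isometric_pairD:
  assumes "isometric_pair V1 V2"
  shows "norm (V1 x) = norm x" and "norm (V2 x) = norm x" and "V1 (V2 x) = V2 (V1 x)"
  using assms by (auto simp: isometric_pair_def isometry_def fun_eq_iff)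

lemma defect_op_fixes_common_kernel:
  assumes "is_adjoint V1 W1" and "is_adjoint V2 W2" and "W1 y = 0" and "W2 y = 0"
  shows "defect_op V1 V2 W1 W2 y = y"
proof -
  have "V1 0 = 0" "V2 0 = 0" "W1 0 = 0"
    using assms(1,2) adjoint_sym by (metis adjoint_linear linear_0)+
  then show ?thesis
    using assms(3,4) by (simp add: defect_op_def)
qed

lemma range_commutator_subset_fixed_defect:
  assumes pair: "isometric_pair V1 V2" and adj1: "is_adjoint V1 W1" and adj2: "is_adjoint V2 W2"
    and comm: "commutator W2 V1 \<circ> commutator W1 V2 = commutator W1 V2 \<circ> commutator W2 V1"
  shows "range (commutator W2 V1) \<subseteq> {x. defect_op V1 V2 W1 W2 x = x}"
proof -
  let ?A = "commutator W2 V1" and ?B = "commutator W1 V2"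
  note iso = isometric_pairD [OF pair]
  have adj: "is_adjoint ?A ?B"
    by (rule adjoint_commutator [OF adjoint_sym [OF adj2] adj1])
  have inv1: "W1 (V1 x) = x" and inv2: "W2 (V2 x) = x" for x
    by (rule isometry_adjoint_left_inverse [OF adj1 iso(1)] isometry_adjoint_left_inverse [OF adj2 iso(2)])+
  have "?A (V2 x) = 0" for x
    by (simp add: commutator_def iso(3) inv2)
  moreover have "?B (V1 x) = 0" for x
    by (simp add: commutator_def inv1 flip: iso(3))
  moreover have "?B (V2 x) = 0" for x
    using normal_norm_eq [OF adj comm, of "V2 x"] calculation by simp
  ultimately have "W1 (?A x) = 0" "W2 (?A x) = 0" for x
    by (simp_all add: adjoint_comp_eq_zero [OF adj1 adj] adjoint_comp_eq_zero [OF adj2 adj])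
  then show ?thesis
    using defect_op_fixes_common_kernel [OF adj1 adj2] by blast
qed

theorem lemma4p2:
  fixes V1 V2 W1 W2 :: "'a::sep_complex_hilbert \<Rightarrow> 'a"
  assumes "BCL_pair V1 V2"
    and "is_adjoint V1 W1" and "is_adjoint V2 W2"
    and "normal_op (commutator W2 V1)"
  shows "range (commutator W2 V1) = range (commutator W1 V2)
       \<and> range (commutator W2 V1) \<subseteq> {x. defect_op V1 V2 W1 W2 x = x}
       \<and> (\<forall>x\<in>orth_compl {x. defect_op V1 V2 W1 W2 x = x}.
             commutator W2 V1 x = 0 \<and> commutator W1 V2 x = 0)"
proof -
  let ?A = "commutator W2 V1" and ?B = "commutator W1 V2"
  let ?E = "{x. defect_op V1 V2 W1 W2 x = x}"
  have pair: "isometric_pair V1 V2"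
    using assms(1) by (simp add: BCL_pair_def)
  note iso = isometric_pairD [OF pair]
  have adj: "is_adjoint ?A ?B"
    by (rule adjoint_commutator [OF adjoint_sym [OF assms(3)] assms(2)])
  have comm: "?A \<circ> ?B = ?B \<circ> ?A"
    by (rule normal_op_commute [OF assms(4) adj])
  have "bounded_linear ?A" "bounded_linear ?B"
    using isometry_bounded_linear [OF assms(2) iso(1)] isometry_bounded_linear [OF assms(3) iso(2)]
    by (simp_all add: bounded_linear_commutator)
  then have ran_eq: "range ?A = range ?B"
    by (rule normal_range_eq [OF adj comm])
  have ran_E: "range ?A \<subseteq> ?E"
    by (rule range_commutator_subset_fixed_defect [OF pair assms(2,3) comm])
  have "?A x = 0 \<and> ?B x = 0" if "x \<in> orth_compl ?E" for x
    using adjoint_vanishes_on_orth_compl [OF adj _ that]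
      adjoint_vanishes_on_orth_compl [OF adjoint_sym [OF adj] _ that] ran_E ran_eq
    by blast
  with ran_eq ran_E show ?thesis
    by blast
qed

end
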